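(* Let $1\le K\le N$. Then $$\mathcal{C}_{N,K}=\mathrm{conv}\left\{R_\sigma\left(\mathcal{C}_{K,K}\oplus 0^{N-K}\right)\ :\ \sigma\in S\right\},$$ where $S\subseteq S_N$ is the set of permutations $\sigma$ of $\{1,\dots,N\}$ for which there exists a subset $\{g_1,\dots,g_K\}\subseteq\{1,\dots,N\}$ with $\sigma(i)=g_i$ for all $i=1,\dots,K$.
   Context: A behavior on $N$ input bits is a family $P=(P(a|\mathbf{x}))_{a\in\{0,1\},\mathbf{x}\in\{0,1\}^N}$ with $P(a|\mathbf{x})\ge0$ and $P(0|\mathbf{x})+P(1|\mathbf{x})=1$; the set of all behaviors is $\mathcal{L}_N\subset\mathbb{R}^{2^{N+1}}$. $\mathcal{C}_{N,K}$ is the set of $P\in\mathcal{L}_N$ for which there exist non-negative weights $q_{j_1\cdots j_K}$ summing to one, indexed by $K$-tuples of pairwise distinct indices in $\{1,\dots,N\}$, and conditional distributions $P(a|x_{j_1}\cdots x_{j_K})$ depending only on $x_{j_1},\dots,x_{j_K}$, with $P(a|\mathbf{x})=\sum q_{j_1\cdots j_K}P(a|x_{j_1}\cdots x_{j_K})$. $\mathcal{C}_{K,K}\oplus 0^{N-K}$ denotes the copy of $\mathcal{C}_{K,K}=\mathcal{L}_K$ embedded in $\mathcal{L}_N$, i.e. the set of behaviors $P\in\mathcal{L}_N$ such that $P(a|\mathbf{x})$ depends only on $x_1,\dots,x_K$ (a hypercube whose vertices are the deterministic behaviors $\delta_{a,f(\mathbf{x})}$ with $f$ depending only on $x_1,\dots,x_K$).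 For $\sigma\in S_N$, $R_\sigma$ is the linear map on behaviors given by $(R_\sigma P)(a|x_1,\dots,x_N)=P(a|x_{\sigma(1)},\dots,x_{\sigma(N)})$. $\mathrm{conv}$ denotes convex hull. *)

theory Defs
  imports "HOL-Analysis.Analysis"
begin

text \<open>Behaviors on N input bits are modelled as functions P a x with a :: bool (output)
 and x :: nat \<Rightarrow> bool (input string; only bits 1..N are used). To identify
 behaviors with vectors in R^(2^(N+1)), inputs are restricted to those vanishing outside
 {1..N} and behaviors are set to 0 on all other inputs.\<close>

definition inputs :: "nat \<Rightarrow> (nat \<Rightarrow> bool) set" where
  "inputs N = {x. \<forall>i. x i \<longrightarrow> i \<in> {1..N}}"

definition behaviors :: "nat \<Rightarrow> (bool \<Rightarrow> (nat \<Rightarrow> bool) \<Rightarrow> real) set" where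
  "behaviors N = {P. (\<forall>a x. x \<notin> inputs N \<longrightarrow> P a x = 0)
                   \<and> (\<forall>a. \<forall>x\<in>inputs N. 0 \<le> P a x)
                   \<and> (\<forall>x\<in>inputs N. P False x + P True x = 1)}"

definition tuples :: "nat \<Rightarrow> nat \<Rightarrow> (nat \<Rightarrow> nat) set" where
  "tuples N K = {j. j \<in> {1..K} \<rightarrow>\<^sub>E {1..N} \<and> inj_on j {1..K}}"

text \<open>The set C_{N,K}: Q j is the conditional distribution P(a | x_{j_1} ... x_{j_K}),
 given as a function of the list of the K relevant bits.\<close>
definition CNK :: "nat \<Rightarrow> nat \<Rightarrow> (bool \<Rightarrow> (nat \<Rightarrow> bool) \<Rightarrow> real) set" where
  "CNK N K = {P \<in> behaviors N. \<exists>(q :: (nat \<Rightarrow> nat) \<Rightarrow> real)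
        (Q :: (nat \<Rightarrow> nat) \<Rightarrow> bool \<Rightarrow> bool list \<Rightarrow> real).
      (\<forall>j\<in>tuples N K. 0 \<le> q j) \<and> (\<Sum>j\<in>tuples N K. q j) = 1
    \<and> (\<forall>j\<in>tuples N K. \<forall>ys. length ys = K \<longrightarrow>
          (\<forall>a. 0 \<le> Q j a ys) \<and> Q j False ys + Q j True ys = 1)
    \<and> (\<forall>a. \<forall>x\<in>inputs N.
          P a x = (\<Sum>j\<in>tuples N K. q j * Q j a (map (x \<circ> j) [1..<Suc K])))}"

text \<open>C_{K,K} (+) 0^{N-K}: behaviors in L_N depending only on x_1..x_K.\<close>
definition embedded :: "nat \<Rightarrow> nat \<Rightarrow> (bool \<Rightarrow> (nat \<Rightarrow> bool) \<Rightarrow> real) set" where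
  "embedded N K = {P \<in> behaviors N. \<forall>a. \<forall>x\<in>inputs N. \<forall>y\<in>inputs N.
       (\<forall>i\<in>{1..K}. x i = y i) \<longrightarrow> P a x = P a y}"

definition Rperm :: "(nat \<Rightarrow> nat) \<Rightarrow> (bool \<Rightarrow> (nat \<Rightarrow> bool) \<Rightarrow> real) \<Rightarrow> (bool \<Rightarrow> (nat \<Rightarrow> bool) \<Rightarrow> real)" where
  "Rperm \<sigma> P = (\<lambda>a x. P a (x \<circ> \<sigma>))"

text \<open>Convex hull: the set of all finite convex combinations (the function space has no
 real_vector instance in the library, so this is written out).\<close>
definition conv :: "(bool \<Rightarrow> (nat \<Rightarrow> bool) \<Rightarrow> real) set \<Rightarrow> (bool \<Rightarrow> (nat \<Rightarrow> bool) \<Rightarrow> real) set" where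
  "conv A = {P. \<exists>(n::nat) (c :: nat \<Rightarrow> real) Ps.
      (\<forall>i<n. 0 \<le> c i \<and> Ps i \<in> A) \<and> (\<Sum>i<n. c i) = 1
    \<and> P = (\<lambda>a x. \<Sum>i<n. c i * Ps i a x)}"

end

theory Submission
  imports Defs
begin

(* A K-tuple j of distinct indices extends to a permutation \<sigma> of {1..N}, and R_\<sigma> turns a
   behavior depending only on x_1, ..., x_K into the behavior P(a | x_{j_1} ... x_{j_K}); conversely
   the first K values of a permutation form such a tuple. Hence the permuted copies of C_{K,K} (+) 0
   are exactly the K-local behaviors, and C_{N,K} is their convex hull: a convex combination that
   uses the same tuple several times is regrouped into one term whose conditional distribution is
   the weighted average. The side condition defining S holds for every permutation (take g = \<sigma>),
   so S is all of S_N. *)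

declare upt_Suc [simp del]

definition cond_distr :: "nat \<Rightarrow> (bool \<Rightarrow> bool list \<Rightarrow> real) \<Rightarrow> bool" where
  "cond_distr K Q \<longleftrightarrow>
    (\<forall>ys. length ys = K \<longrightarrow> (\<forall>a. 0 \<le> Q a ys) \<and> Q False ys + Q True ys = 1)"

definition local_behavior :: "nat \<Rightarrow> nat \<Rightarrow> (nat \<Rightarrow> nat) \<Rightarrow> (bool \<Rightarrow> bool list \<Rightarrow> real)
    \<Rightarrow> bool \<Rightarrow> (nat \<Rightarrow> bool) \<Rightarrow> real" where
  "local_behavior N K j Q =
    (\<lambda>a x. if x \<in> inputs N then Q a (map (x \<circ> j) [1..<Suc K]) else 0)"

definition local_behaviors :: "nat \<Rightarrow> nat \<Rightarrow> (bool \<Rightarrow> (nat \<Rightarrow> bool) \<Rightarrow> real) set" where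
  "local_behaviors N K = {local_behavior N K j Q | j Q. j \<in> tuples N K \<and> cond_distr K Q}"

definition input_of_list :: "nat \<Rightarrow> bool list \<Rightarrow> nat \<Rightarrow> bool" where
  "input_of_list K ys = (\<lambda>k. if k \<in> {1..K} then ys ! (k - 1) else False)"

lemma input_of_list_in_inputs: "K \<le> N \<Longrightarrow> input_of_list K ys \<in> inputs N"
  unfolding input_of_list_def inputs_def by auto

lemma input_of_list_map: "k \<in> {1..K} \<Longrightarrow> input_of_list K (map x [1..<Suc K]) k = x k"
  unfolding input_of_list_def by auto

lemma inputs_comp_permutes:
  assumes "\<sigma> permutes {1..N}"
  shows "x \<circ> \<sigma> \<in> inputs N \<longleftrightarrow> x \<in> inputs N"
proof
  assume x\<sigma>: "x \<circ> \<sigma> \<in> inputs N"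
  show "x \<in> inputs N"
    unfolding inputs_def
  proof (intro CollectI allI impI)
    fix i assume "x i"
    then have "(x \<circ> \<sigma>) (inv \<sigma> i)"
      using permutes_inverses(1)[OF assms] by simp
    then have "inv \<sigma> i \<in> {1..N}"
      using x\<sigma> unfolding inputs_def by blast
    then show "i \<in> {1..N}"
      using permutes_in_image[OF permutes_inv[OF assms]] by blast
  qed
next
  assume "x \<in> inputs N"
  then show "x \<circ> \<sigma> \<in> inputs N"
    using permutes_in_image[OF assms] unfolding inputs_def by auto
qed

lemma finite_tuples: "finite (tuples N K)"
proof (rule finite_subset)
  show "tuples N K \<subseteq> {1..K} \<rightarrow>\<^sub>E {1..N}"
    unfolding tuples_def by auto
qed (simp add: finite_PiE)

lemma tuple_extends_to_permutation:
  assumes "j \<in> tuples N K" "K \<le> N"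
  obtains \<sigma> where "\<sigma> permutes {1..N}" "\<forall>i\<in>{1..K}. \<sigma> i = j i"
proof -
  have j_into: "j ` {1..K} \<subseteq> {1..N}" and j_inj: "inj_on j {1..K}"
    using assms unfolding tuples_def by auto
  have "card ({1..N} - {1..K}) = card ({1..N} - j ` {1..K})"
    using j_into j_inj assms(2) by (simp add: card_Diff_subset card_image)
  then obtain h where h: "bij_betw h ({1..N} - {1..K}) ({1..N} - j ` {1..K})"
    by (metis finite_Diff finite_atLeastAtMost finite_same_card_bij)
  define \<sigma> where "\<sigma> x = (if x \<in> {1..K} then j x else if x \<in> {1..N} then h x else x)" for x
  have "bij_betw \<sigma> ({1..K} \<union> ({1..N} - {1..K})) (j ` {1..K} \<union> ({1..N} - j ` {1..K}))"
  proof (rule bij_betw_combine)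
    show "bij_betw \<sigma> {1..K} (j ` {1..K})"
      using inj_on_imp_bij_betw[OF j_inj]
      by (rule bij_betw_cong[THEN iffD1, rotated]) (simp add: \<sigma>_def)
    show "bij_betw \<sigma> ({1..N} - {1..K}) ({1..N} - j ` {1..K})"
      using h by (rule bij_betw_cong[THEN iffD1, rotated]) (simp add: \<sigma>_def)
  qed auto
  moreover have "{1..K} \<union> ({1..N} - {1..K}) = {1..N}"
    "j ` {1..K} \<union> ({1..N} - j ` {1..K}) = {1..N}"
    using assms(2) j_into by auto
  ultimately have "\<sigma> permutes {1..N}"
    by (intro bij_imp_permutes) (auto simp: \<sigma>_def)
  then show thesis
    by (rule that) (simp add: \<sigma>_def)
qed

lemma restrict_permutes_in_tuples:
  assumes "\<sigma> permutes {1..N}" "K \<le> N"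
  shows "restrict \<sigma> {1..K} \<in> tuples N K"
  using assms permutes_inj_on[OF assms(1)] permutes_in_image[OF assms(1)]
  unfolding tuples_def by (auto simp: inj_on_def)

lemma local_behavior_in_behaviors:
  "cond_distr K Q \<Longrightarrow> local_behavior N K j Q \<in> behaviors N"
  unfolding cond_distr_def local_behavior_def behaviors_def by simp

lemma local_behavior_cong:
  "\<forall>i\<in>{1..K}. j i = j' i \<Longrightarrow> local_behavior N K j Q = local_behavior N K j' Q"
proof -
  assume "\<forall>i\<in>{1..K}. j i = j' i"
  then have map_eq: "map (x \<circ> j) [1..<Suc K] = map (x \<circ> j') [1..<Suc K]"
    for x :: "nat \<Rightarrow> bool"
    by (intro map_cong) auto
  show ?thesis
    unfolding local_behavior_def by (simp only: map_eq cong: if_cong)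
qed

lemma Rperm_local_behavior:
  assumes "\<sigma> permutes {1..N}"
  shows "Rperm \<sigma> (local_behavior N K j Q) = local_behavior N K (\<sigma> \<circ> j) Q"
  unfolding Rperm_def local_behavior_def inputs_comp_permutes[OF assms]
  by (simp add: o_assoc cong: if_cong)

lemma embedded_eq_local_behaviors:
  assumes "K \<le> N"
  shows "embedded N K = local_behavior N K id ` Collect (cond_distr K)"
proof
  show "embedded N K \<subseteq> local_behavior N K id ` Collect (cond_distr K)"
  proof
    fix E assume E: "E \<in> embedded N K"
    define Q where "Q a ys = E a (input_of_list K ys)" for a ys
    have "cond_distr K Q"
      using E input_of_list_in_inputs[OF assms]
      unfolding Q_def cond_distr_def embedded_def behaviors_def by blast
    moreover have "E = local_behavior N K id Q"
    proof (intro ext)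
      fix a x
      show "E a x = local_behavior N K id Q a x"
      proof (cases "x \<in> inputs N")
        case True
        have "\<forall>i\<in>{1..K}. x i = input_of_list K (map x [1..<Suc K]) i"
          using input_of_list_map by simp
        then have "E a x = E a (input_of_list K (map x [1..<Suc K]))"
          using E True input_of_list_in_inputs[OF assms] unfolding embedded_def by blast
        then show ?thesis
          using True unfolding local_behavior_def Q_def by simp
      next
        case False
        then show ?thesis
          using E unfolding embedded_def behaviors_def local_behavior_def by simp
      qed
    qed
    ultimately show "E \<in> local_behavior N K id ` Collect (cond_distr K)"
      by blast
  qed
next
  show "local_behavior N K id ` Collect (cond_distr K) \<subseteq> embedded N K"
  proof
    fix P assume "P \<in> local_behavior N K id ` Collect (cond_distr K)"
    then obtain Q where Q: "cond_distr K Q" and P: "P = local_behavior N K id Q"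
      by blast
    show "P \<in> embedded N K"
      using local_behavior_in_behaviors[OF Q]
      unfolding embedded_def P local_behavior_def
      by (auto intro!: arg_cong2[where f = Q] map_cong)
  qed
qed

lemma Rperm_embedded_eq_local_behaviors:
  assumes "\<sigma> permutes {1..N}" "K \<le> N"
  shows "Rperm \<sigma> ` embedded N K = local_behavior N K \<sigma> ` Collect (cond_distr K)"
proof -
  have Rperm_id: "Rperm \<sigma> (local_behavior N K id Q) = local_behavior N K \<sigma> Q" for Q
    using Rperm_local_behavior[OF assms(1)] by simp
  show ?thesis
    unfolding embedded_eq_local_behaviors[OF assms(2)] by (simp add: image_image Rperm_id)
qed

lemma permuted_embedded_eq_local_behaviors:
  assumes "K \<le> N"
  shows "(\<Union>\<sigma>\<in>{\<sigma>. \<sigma> permutes {1..N}}. Rperm \<sigma> ` embedded N K) = local_behaviors N K"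
proof (intro equalityI subsetI)
  fix P assume "P \<in> (\<Union>\<sigma>\<in>{\<sigma>. \<sigma> permutes {1..N}}. Rperm \<sigma> ` embedded N K)"
  then obtain \<sigma> where \<sigma>: "\<sigma> permutes {1..N}" and "P \<in> Rperm \<sigma> ` embedded N K"
    by blast
  then obtain Q where Q: "cond_distr K Q" and P: "P = local_behavior N K \<sigma> Q"
    unfolding Rperm_embedded_eq_local_behaviors[OF \<sigma> assms] by blast
  have "P = local_behavior N K (restrict \<sigma> {1..K}) Q"
    unfolding P by (rule local_behavior_cong) simp
  moreover have "restrict \<sigma> {1..K} \<in> tuples N K"
    using restrict_permutes_in_tuples[OF \<sigma> assms] .
  ultimately show "P \<in> local_behaviors N K"
    unfolding local_behaviors_def using Q by blast
next
  fix P assume "P \<in> local_behaviors N K"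
  then obtain j Q where j: "j \<in> tuples N K" and Q: "cond_distr K Q"
    and P: "P = local_behavior N K j Q"
    unfolding local_behaviors_def by blast
  obtain \<sigma> where \<sigma>: "\<sigma> permutes {1..N}" and agree: "\<forall>i\<in>{1..K}. \<sigma> i = j i"
    using tuple_extends_to_permutation[OF j assms] .
  have "P = local_behavior N K \<sigma> Q"
    unfolding P by (rule local_behavior_cong) (simp add: agree)
  then have "P \<in> Rperm \<sigma> ` embedded N K"
    unfolding Rperm_embedded_eq_local_behaviors[OF \<sigma> assms] using Q by blast
  with \<sigma> show "P \<in> (\<Union>\<sigma>\<in>{\<sigma>. \<sigma> permutes {1..N}}. Rperm \<sigma> ` embedded N K)"
    by blast
qed

lemma sum_in_conv:
  assumes "finite T" "\<forall>j\<in>T. 0 \<le> q j \<and> F j \<in> A" "(\<Sum>j\<in>T. q j) = 1"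
  shows "(\<lambda>a x. \<Sum>j\<in>T. q j * F j a x) \<in> conv A"
proof -
  obtain h where h: "bij_betw h {..<card T} T"
    using ex_bij_betw_nat_finite[OF assms(1)] by (auto simp: atLeast0LessThan)
  have reindex: "(\<Sum>i<card T. f (h i)) = (\<Sum>j\<in>T. f j)" for f :: "_ \<Rightarrow> real"
    using sum.reindex_bij_betw[OF h] .
  have "\<forall>i<card T. 0 \<le> q (h i) \<and> F (h i) \<in> A"
    using assms(2) bij_betwE[OF h] by auto
  moreover have "(\<Sum>i<card T. q (h i) * F (h i) a x) = (\<Sum>j\<in>T. q j * F j a x)" for a x
    by (rule reindex)
  ultimately show ?thesis
    unfolding conv_def using assms(3) reindex[of q]
    by (intro CollectI exI[of _ "card T"] exI[of _ "q \<circ> h"] exI[of _ "F \<circ> h"]) simp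
qed

lemma conv_subset_behaviors:
  assumes "A \<subseteq> behaviors N"
  shows "conv A \<subseteq> behaviors N"
proof
  fix P assume "P \<in> conv A"
  then obtain n and c :: "nat \<Rightarrow> real" and Ps
    where c: "\<forall>i<n. 0 \<le> c i" "(\<Sum>i<n. c i) = 1" and "\<forall>i<n. Ps i \<in> A"
      and P: "P = (\<lambda>a x. \<Sum>i<n. c i * Ps i a x)"
    unfolding conv_def by blast
  then have Ps: "Ps i \<in> behaviors N" if "i < n" for i
    using assms that by blast
  show "P \<in> behaviors N"
    unfolding behaviors_def
  proof (intro CollectI conjI allI impI ballI)
    show "P a x = 0" if "x \<notin> inputs N" for a x
      using Ps that unfolding P behaviors_def by (auto intro!: sum.neutral)
    show "0 \<le> P a x" if "x \<in> inputs N" for a x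
      using Ps c that unfolding P behaviors_def by (auto intro!: sum_nonneg)
    show "P False x + P True x = 1" if x: "x \<in> inputs N" for x
    proof -
      have "P False x + P True x = (\<Sum>i<n. c i * (Ps i False x + Ps i True x))"
        unfolding P by (simp add: sum.distrib distrib_left)
      also have "\<dots> = (\<Sum>i<n. c i)"
        using Ps x unfolding behaviors_def by (intro sum.cong) auto
      finally show ?thesis
        using c(2) by simp
    qed
  qed
qed

lemma cond_distr_weighted_average:
  assumes "\<forall>i\<in>A. 0 \<le> c i" "(\<Sum>i\<in>A. c i) \<noteq> 0" "\<forall>i\<in>A. cond_distr K (Qs i)"
  shows "cond_distr K (\<lambda>a ys. (\<Sum>i\<in>A. c i * Qs i a ys) / (\<Sum>i\<in>A. c i))"
  unfolding cond_distr_def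
proof (intro allI impI conjI)
  fix ys :: "bool list" assume "length ys = K"
  then have Qs_ys: "0 \<le> Qs i a ys" "Qs i False ys + Qs i True ys = 1" if "i \<in> A" for i a
    using assms(3) that unfolding cond_distr_def by auto
  show "0 \<le> (\<Sum>i\<in>A. c i * Qs i a ys) / (\<Sum>i\<in>A. c i)" for a
    using assms(1) Qs_ys by (auto intro!: divide_nonneg_nonneg sum_nonneg)
  have "(\<Sum>i\<in>A. c i * Qs i False ys) + (\<Sum>i\<in>A. c i * Qs i True ys)
      = (\<Sum>i\<in>A. c i * (Qs i False ys + Qs i True ys))"
    by (simp add: sum.distrib distrib_left)
  also have "\<dots> = (\<Sum>i\<in>A. c i)"
    using Qs_ys by (intro sum.cong) auto
  finally show "(\<Sum>i\<in>A. c i * Qs i False ys) / (\<Sum>i\<in>A. c i)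
      + (\<Sum>i\<in>A. c i * Qs i True ys) / (\<Sum>i\<in>A. c i) = 1"
    using assms(2) by (simp add: add_divide_distrib[symmetric])
qed

lemma mixture_regroup:
  fixes c :: "'i \<Rightarrow> real" and jt :: "'i \<Rightarrow> 'j"
  assumes "finite I" "finite T" "jt ` I \<subseteq> T"
    and c: "\<forall>i\<in>I. 0 \<le> c i" "(\<Sum>i\<in>I. c i) = 1"
    and Qs: "\<forall>i\<in>I. cond_distr K (Qs i)"
  obtains q Q where "\<forall>j\<in>T. 0 \<le> q j" "(\<Sum>j\<in>T. q j) = 1" "\<forall>j. cond_distr K (Q j)"
    "\<And>a g. (\<Sum>i\<in>I. c i * Qs i a (g (jt i))) = (\<Sum>j\<in>T. q j * Q j a (g j))"
proof -
  define fiber where "fiber j = {i \<in> I. jt i = j}" for j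
  define q where "q j = (\<Sum>i\<in>fiber j. c i)" for j
  \<comment> \<open>On a fiber of weight zero, any conditional distribution will do.\<close>
  define Q where "Q j = (if q j = 0 then (\<lambda>a ys. if a then 1 else 0)
      else (\<lambda>a ys. (\<Sum>i\<in>fiber j. c i * Qs i a ys) / q j))" for j
  have c_fiber: "\<forall>i\<in>fiber j. 0 \<le> c i" for j
    using c(1) unfolding fiber_def by simp
  have q_nonneg: "0 \<le> q j" for j
    unfolding q_def using c_fiber by (simp add: sum_nonneg)
  have group: "(\<Sum>i\<in>I. f i) = (\<Sum>j\<in>T. \<Sum>i\<in>fiber j. f i)" for f :: "'i \<Rightarrow> real"
    unfolding fiber_def by (rule sum.group[OF assms(1-3), symmetric])
  have weighted: "q j * Q j a ys = (\<Sum>i\<in>fiber j. c i * Qs i a ys)" for j a ys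
  proof (cases "q j = 0")
    case True
    have "finite (fiber j)"
      using assms(1) unfolding fiber_def by simp
    with True c_fiber have "\<forall>i\<in>fiber j. c i = 0"
      unfolding q_def by (simp add: sum_nonneg_eq_0_iff)
    with True show ?thesis
      by simp
  qed (simp add: Q_def)
  have Q_distr: "cond_distr K (Q j)" for j
  proof (cases "q j = 0")
    case False
    have "\<forall>i\<in>fiber j. cond_distr K (Qs i)"
      using Qs unfolding fiber_def by simp
    with False c_fiber show ?thesis
      unfolding Q_def q_def by (simp add: cond_distr_weighted_average)
  qed (simp add: Q_def cond_distr_def)
  have fiber_sum: "(\<Sum>i\<in>fiber j. c i * Qs i a (g (jt i))) = q j * Q j a (g j)" for a g j
    unfolding weighted fiber_def by (intro sum.cong) simp_all
  show thesis
  proof (rule that)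
    show "\<forall>j\<in>T. 0 \<le> q j"
      using q_nonneg by simp
    show "(\<Sum>j\<in>T. q j) = 1"
      using c(2) unfolding group q_def .
    show "\<forall>j. cond_distr K (Q j)"
      using Q_distr by simp
    show "(\<Sum>i\<in>I. c i * Qs i a (g (jt i))) = (\<Sum>j\<in>T. q j * Q j a (g j))" for a g
      unfolding group by (rule sum.cong[OF refl fiber_sum])
  qed
qed

lemma CNK_subset_conv_local_behaviors: "CNK N K \<subseteq> conv (local_behaviors N K)"
proof
  fix P assume "P \<in> CNK N K"
  then obtain q Q where P: "P \<in> behaviors N"
    and q: "\<forall>j\<in>tuples N K. 0 \<le> q j" "(\<Sum>j\<in>tuples N K. q j) = 1"
    and Q: "\<forall>j\<in>tuples N K. cond_distr K (Q j)"
    and decomp: "\<forall>a. \<forall>x\<in>inputs N.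
      P a x = (\<Sum>j\<in>tuples N K. q j * Q j a (map (x \<circ> j) [1..<Suc K]))"
    unfolding CNK_def cond_distr_def by blast
  have "P = (\<lambda>a x. \<Sum>j\<in>tuples N K. q j * local_behavior N K j (Q j) a x)"
  proof (intro ext)
    fix a x
    show "P a x = (\<Sum>j\<in>tuples N K. q j * local_behavior N K j (Q j) a x)"
      using P decomp unfolding behaviors_def local_behavior_def
      by (cases "x \<in> inputs N") simp_all
  qed
  also have "\<dots> \<in> conv (local_behaviors N K)"
    using q Q unfolding local_behaviors_def by (intro sum_in_conv finite_tuples) auto
  finally show "P \<in> conv (local_behaviors N K)" .
qed

lemma conv_local_behaviors_subset_CNK: "conv (local_behaviors N K) \<subseteq> CNK N K"
proof
  fix P assume P: "P \<in> conv (local_behaviors N K)"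
  then obtain n and c :: "nat \<Rightarrow> real" and Ps
    where c: "\<forall>i<n. 0 \<le> c i" "(\<Sum>i<n. c i) = 1" and "\<forall>i<n. Ps i \<in> local_behaviors N K"
      and P_eq: "P = (\<lambda>a x. \<Sum>i<n. c i * Ps i a x)"
    unfolding conv_def by blast
  then have "\<forall>i<n. \<exists>j Q. j \<in> tuples N K \<and> cond_distr K Q \<and> Ps i = local_behavior N K j Q"
    unfolding local_behaviors_def by blast
  then obtain jt Qs where jt: "\<forall>i<n. jt i \<in> tuples N K \<and> cond_distr K (Qs i)
      \<and> Ps i = local_behavior N K (jt i) (Qs i)"
    by metis
  have regroup_hyps: "jt ` {..<n} \<subseteq> tuples N K" "\<forall>i\<in>{..<n}. 0 \<le> c i"
    "\<forall>i\<in>{..<n}. cond_distr K (Qs i)"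
    using c(1) jt by auto
  obtain q Q where q: "\<forall>j\<in>tuples N K. 0 \<le> q j" "(\<Sum>j\<in>tuples N K. q j) = 1"
    and Q: "\<forall>j. cond_distr K (Q j)"
    and regroup: "\<And>a g. (\<Sum>i<n. c i * Qs i a (g (jt i)))
      = (\<Sum>j\<in>tuples N K. q j * Q j a (g j))"
    using mixture_regroup[OF finite_lessThan finite_tuples regroup_hyps(1,2) c(2)
        regroup_hyps(3)]
    by blast
  have "local_behaviors N K \<subseteq> behaviors N"
    unfolding local_behaviors_def using local_behavior_in_behaviors by blast
  then have "P \<in> behaviors N"
    using conv_subset_behaviors P by blast
  moreover have "P a x = (\<Sum>j\<in>tuples N K. q j * Q j a (map (x \<circ> j) [1..<Suc K]))"
    if "x \<in> inputs N" for a x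
  proof -
    have "P a x = (\<Sum>i<n. c i * Qs i a (map (x \<circ> jt i) [1..<Suc K]))"
      unfolding P_eq using that jt by (auto intro!: sum.cong simp: local_behavior_def)
    also have "\<dots> = (\<Sum>j\<in>tuples N K. q j * Q j a (map (x \<circ> j) [1..<Suc K]))"
      by (rule regroup)
    finally show ?thesis .
  qed
  ultimately show "P \<in> CNK N K"
    unfolding CNK_def using q Q unfolding cond_distr_def by blast
qed

lemma permutations_with_injective_prefix_eq:
  fixes N K :: nat
  assumes "K \<le> N"
  shows "{\<sigma>. \<sigma> permutes {1..N} \<and>
            (\<exists>g. inj_on g {1..K} \<and> g ` {1..K} \<subseteq> {1..N} \<and> (\<forall>i\<in>{1..K}. \<sigma> i = g i))}
       = {\<sigma>. \<sigma> permutes {1..N}}"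
proof -
  have "{1..K} \<subseteq> {1..N}"
    using assms by auto
  then have "inj_on \<sigma> {1..K} \<and> \<sigma> ` {1..K} \<subseteq> {1..N}" if "\<sigma> permutes {1..N}" for \<sigma>
    using permutes_inj_on[OF that] image_mono permutes_image[OF that] by metis
  then show ?thesis
    by blast
qed

theorem lemma1:
  fixes N K :: nat
  assumes "1 \<le> K" and "K \<le> N"
  shows "CNK N K = conv (\<Union>\<sigma> \<in> {\<sigma>. \<sigma> permutes {1..N} \<and>
            (\<exists>g. inj_on g {1..K} \<and> g ` {1..K} \<subseteq> {1..N} \<and> (\<forall>i\<in>{1..K}. \<sigma> i = g i))}.
          Rperm \<sigma> ` embedded N K)"
proof -
  have "CNK N K = conv (local_behaviors N K)"
    using CNK_subset_conv_local_behaviors conv_local_behaviors_subset_CNK by (rule equalityI)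
  then show ?thesis
    unfolding permutations_with_injective_prefix_eq[OF assms(2)]
      permuted_embedded_eq_local_behaviors[OF assms(2)] .
qed

end
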